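(* Let $\Omega$ be a zigzag continual diagram, let $\epsilon>0$, let $f(x)=x+b$ with $b>0$, let $z_+$ be the maximal real number with $f(z_+)=\Omega(z_+-\epsilon)+\epsilon$, and let $\overline{\Omega}=\overline{\Omega}_{\Omega,\epsilon,f}$ be the $\epsilon$-shift of $\Omega$ along $f$. Then for every non-negative function $\phi\colon\mathbb{R}\to\mathbb{R}_+$, \[\int_{-\infty}^{\infty}\phi(z)\,d\mu_{\overline{\Omega}}(z)\ \ge\ \int_{-\infty}^{\infty}\phi(z+\epsilon)\,P^{\min}_{z_+}(z+\epsilon)\,d\mu_\Omega(z).\]
   Context: A continual diagram is a function $\omega\colon\mathbb{R}\to\mathbb{R}_+$ such that $|\omega(z_1)-\omega(z_2)|\le|z_1-z_2|$ for all $z_1,z_2$, and $\omega(z)=|z|$ for all sufficiently large $|z|$. It is a zigzag if it is piecewise affine with slopes only $\pm1$; then, with its local minima at $\mathbbm{x}_0<\dots<\mathbbm{x}_L$ and local maxima at $\mathbbm{y}_1<\dots<\mathbbm{y}_L$, its Cauchy transform is $\mathbf{G}_\omega(z)=\prod_{i=1}^L(z-\mathbbm{y}_i)/\prod_{i=0}^L(z-\mathbbm{x}_i)$, which decomposes as $\sum_i p_i/(z-\mathbbm{x}_i)$ with $p_i>0$, $\sum p_i=1$, and the transition measure is $\mu_\omega=\sum_i p_i\delta_{\mathbbm{x}_i}$. For a general continual diagram, $\log[z\,\mathbf{G}_\omega(z)]=-\int_{-\infty}^\infty\frac{1}{z-w}\big(\frac{\omega(w)-|w|}{2}\big)'\,dw$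 ($z\in\mathbb{C}\setminus\mathbb{R}$) and $\mu_\omega$ is the probability measure with $\mathbf{G}_\omega(z)=\int\frac{d\mu_\omega(x)}{z-x}$ (this agrees with the zigzag definition). $\epsilon$-shift: $\overline{\Omega}_{\Omega,\epsilon,f}(z)=\min\big[\max[\Omega(z-\epsilon)-\epsilon,\ f(z)],\ \Omega(z-\epsilon)+\epsilon\big]$. For real $z_+$ (and the fixed $\epsilon$): $P^{\min}_{z_+}(z)=\frac{z-z_+}{z+\epsilon-z_+}$ for $z\ge z_+$, and $P^{\min}_{z_+}(z)=0$ otherwise. *)

theory Defs
  imports "HOL-Probability.Probability"
begin

definition continual_diagram :: "(real \<Rightarrow> real) \<Rightarrow> bool" where
  "continual_diagram \<omega> \<longleftrightarrow>
     (\<forall>z. \<omega> z \<ge> 0) \<and>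
     (\<forall>z1 z2. \<bar>\<omega> z1 - \<omega> z2\<bar> \<le> \<bar>z1 - z2\<bar>) \<and>
     (\<exists>R. \<forall>z. \<bar>z\<bar> \<ge> R \<longrightarrow> \<omega> z = \<bar>z\<bar>)"

definition zigzag :: "(real \<Rightarrow> real) \<Rightarrow> bool" where
  "zigzag \<omega> \<longleftrightarrow> continual_diagram \<omega> \<and>
     (\<exists>S. finite S \<and>
        (\<forall>a b. a < b \<and> {a<..<b} \<inter> S = {} \<longrightarrow>
           (\<exists>s\<in>{-1, 1::real}. \<forall>x\<in>{a..b}. \<omega> x = \<omega> a + s * (x - a))))"

definition local_minima :: "(real \<Rightarrow> real) \<Rightarrow> real set" where
  "local_minima \<omega> = {x. \<exists>d>0. \<forall>y. \<bar>y - x\<bar> < d \<longrightarrow> \<omega> x \<le> \<omega> y}"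

definition local_maxima :: "(real \<Rightarrow> real) \<Rightarrow> real set" where
  "local_maxima \<omega> = {x. \<exists>d>0. \<forall>y. \<bar>y - x\<bar> < d \<longrightarrow> \<omega> y \<le> \<omega> x}"

text \<open>Weight p_i of the minimum x_i in the partial fraction decomposition of
  G(z) = prod (z - y_j) / prod (z - x_i), i.e. the residue at x_i.\<close>
definition zigzag_weight :: "(real \<Rightarrow> real) \<Rightarrow> real \<Rightarrow> real" where
  "zigzag_weight \<omega> x =
     (if x \<in> local_minima \<omega> then
        (\<Prod>y\<in>local_maxima \<omega>. (x - y)) / (\<Prod>x'\<in>local_minima \<omega> - {x}. (x - x'))
      else 0)"

definition transition_measure :: "(real \<Rightarrow> real) \<Rightarrow> real measure" where
  "transition_measure \<omega> = density (count_space UNIV) (\<lambda>x. ennreal (zigzag_weight \<omega> x))"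

definition eps_shift :: "(real \<Rightarrow> real) \<Rightarrow> real \<Rightarrow> (real \<Rightarrow> real) \<Rightarrow> real \<Rightarrow> real" where
  "eps_shift \<Omega> \<epsilon> f z = min (max (\<Omega> (z - \<epsilon>) - \<epsilon>) (f z)) (\<Omega> (z - \<epsilon>) + \<epsilon>)"

definition P_min :: "real \<Rightarrow> real \<Rightarrow> real \<Rightarrow> real" where
  "P_min \<epsilon> zp z = (if z \<ge> zp then (z - zp) / (z + \<epsilon> - zp) else 0)"

end

theory Submission
  imports Defs
begin

text \<open>
  Both \<Omega>(\<cdot> - \<epsilon>) + \<epsilon> and the shifted diagram are affine with slope \<plusminus>1 between
  finitely many breakpoints, and their local extrema lie among the breakpoints. The weight
  of a local minimum w > z_+ is \<Prod>(w - y_j) / \<Prod>(w - x_i) over the other extrema; it splits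
  into the factor of the extrema \<le> z_+ and the factor of those > z_+. Right of z_+ the line
  lies above \<Omega>(\<cdot> - \<epsilon>) + \<epsilon>, so there the two diagrams agree, and so do the right factors.
  For a diagram g, the logarithm of the left factor is -1/2 times the integral of
  (1 + g'(u)) / (w - u) over [a, z_+], for any a left of all breakpoints. After integration by
  parts this involves only the values of g, and the bound
  shifted(u) \<ge> \<Omega>(u - \<epsilon>) + \<epsilon> - 2 min(\<epsilon>, z_+ - u) for u \<le> z_+ shows that the left factor
  shrinks at most by (w - z_+) / (w + \<epsilon> - z_+), which is P_min at w.
\<close>

section \<open>Piecewise affine functions with slopes \<plusminus>1\<close>

definition slope_on :: "(real \<Rightarrow> real) \<Rightarrow> real \<Rightarrow> real set \<Rightarrow> bool" where
  "slope_on g s I \<longleftrightarrow> (\<forall>x\<in>I. \<forall>y\<in>I. g y = g x + s * (y - x))"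

lemma slope_on_subset: "slope_on g s I \<Longrightarrow> J \<subseteq> I \<Longrightarrow> slope_on g s J"
  unfolding slope_on_def by blast

lemma slope_on_cong: "(\<And>x. x \<in> I \<Longrightarrow> g x = h x) \<Longrightarrow> slope_on g s I \<longleftrightarrow> slope_on h s I"
  unfolding slope_on_def by simp

lemma slope_onD: "slope_on g s I \<Longrightarrow> x \<in> I \<Longrightarrow> y \<in> I \<Longrightarrow> g y = g x + s * (y - x)"
  unfolding slope_on_def by blast

lemma slope_on_iff_anchor:
  assumes "t \<in> I"
  shows "slope_on g s I \<longleftrightarrow> (\<forall>x\<in>I. g x = g t + s * (x - t))"
proof
  assume anchored: "\<forall>x\<in>I. g x = g t + s * (x - t)"
  have "g y = g x + s * (y - x)" if "x \<in> I" "y \<in> I" for x y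
    using anchored[rule_format, OF that(1)] anchored[rule_format, OF that(2)] by (simp add: algebra_simps)
  then show "slope_on g s I" unfolding slope_on_def by blast
qed (use assms slope_onD in blast)

lemma slope_on_unique:
  assumes "slope_on g s I" "slope_on g s' I" "x \<in> I" "y \<in> I" "x \<noteq> y"
  shows "s = s'"
proof -
  have "s * (y - x) = s' * (y - x)"
    using slope_onD[OF assms(1,3,4)] slope_onD[OF assms(2,3,4)] by linarith
  then show ?thesis using assms(5) by simp
qed

lemma slope_on_diff:
  assumes "slope_on f s I" "slope_on g r I"
  shows "slope_on (\<lambda>x. f x - g x) (s - r) I"
proof -
  have "f y - g y = f x - g x + (s - r) * (y - x)" if "x \<in> I" "y \<in> I" for x y
    using slope_onD[OF assms(1) that] slope_onD[OF assms(2) that] by (simp add: algebra_simps)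
  then show ?thesis unfolding slope_on_def by blast
qed

lemma slope_on_uminus: "slope_on g s I \<Longrightarrow> slope_on (\<lambda>x. - g x) (- s) I"
  unfolding slope_on_def by (simp add: algebra_simps)

definition unit_slope_pieces :: "(real \<Rightarrow> real) \<Rightarrow> real set \<Rightarrow> bool" where
  "unit_slope_pieces g T \<longleftrightarrow> finite T \<and>
     (\<forall>p q. p < q \<and> {p<..<q} \<inter> T = {} \<longrightarrow> (\<exists>s\<in>{-1, 1}. slope_on g s {p..q}))"

lemma unit_slope_piecesD:
  "unit_slope_pieces g T \<Longrightarrow> p < q \<Longrightarrow> {p<..<q} \<inter> T = {} \<Longrightarrow> \<exists>s\<in>{-1, 1}. slope_on g s {p..q}"
  unfolding unit_slope_pieces_def by blast

lemma unit_slope_pieces_finite: "unit_slope_pieces g T \<Longrightarrow> finite T"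
  unfolding unit_slope_pieces_def by simp

lemma zigzag_unit_slope_pieces:
  assumes "zigzag \<omega>"
  obtains T where "unit_slope_pieces \<omega> T"
proof -
  obtain S where "finite S" and S: "\<And>p q. p < q \<Longrightarrow> {p<..<q} \<inter> S = {} \<Longrightarrow>
      \<exists>s\<in>{-1, 1}. \<forall>x\<in>{p..q}. \<omega> x = \<omega> p + s * (x - p)"
    using assms unfolding zigzag_def by metis
  have "\<exists>s\<in>{-1, 1}. slope_on \<omega> s {p..q}" if "p < q" "{p<..<q} \<inter> S = {}" for p q
    using S[OF that] slope_on_iff_anchor[of p "{p..q}"] that(1) by simp
  then show thesis
    using that \<open>finite S\<close> unfolding unit_slope_pieces_def by blast
qed

lemma unit_slope_pieces_local:
  assumes "unit_slope_pieces g T"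
  obtains \<delta> s1 s2 where "\<delta> > 0" "s1 \<in> {-1, 1}" "s2 \<in> {-1, 1}"
    "slope_on g s1 {t-\<delta>..t}" "slope_on g s2 {t..t+\<delta>}" "t \<notin> T \<Longrightarrow> s1 = s2"
proof -
  obtain \<delta> where \<delta>: "\<delta> > 0" "\<forall>x\<in>T. x \<noteq> t \<longrightarrow> \<delta> \<le> dist t x"
    using finite_set_avoid[OF unit_slope_pieces_finite[OF assms]] by blast
  have free: "{t-\<delta><..<t+\<delta>} \<inter> T \<subseteq> {t}"
  proof
    fix x assume "x \<in> {t-\<delta><..<t+\<delta>} \<inter> T"
    then have "x \<in> T" "dist t x < \<delta>" by (auto simp: dist_real_def)
    then show "x \<in> {t}" using \<delta>(2) by force
  qed
  show thesis
  proof (cases "t \<in> T")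
    case True
    have "{t-\<delta><..<t} \<inter> T \<subseteq> {t-\<delta><..<t+\<delta>} \<inter> T - {t}" "{t<..<t+\<delta>} \<inter> T \<subseteq> {t-\<delta><..<t+\<delta>} \<inter> T - {t}"
      by auto
    then have left: "{t-\<delta><..<t} \<inter> T = {}" and right: "{t<..<t+\<delta>} \<inter> T = {}" using free by blast+
    have "t - \<delta> < t" "t < t + \<delta>" using \<open>\<delta> > 0\<close> by auto
    obtain s1 where "s1 \<in> {-1, 1}" "slope_on g s1 {t-\<delta>..t}"
      using unit_slope_piecesD[OF assms \<open>t - \<delta> < t\<close> left] by blast
    moreover obtain s2 where "s2 \<in> {-1, 1}" "slope_on g s2 {t..t+\<delta>}"
      using unit_slope_piecesD[OF assms \<open>t < t + \<delta>\<close> right] by blast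
    ultimately show thesis using that[of \<delta> s1 s2] \<open>\<delta> > 0\<close> True by blast
  next
    case False
    then have free': "{t-\<delta><..<t+\<delta>} \<inter> T = {}" using free by blast
    have "t - \<delta> < t + \<delta>" using \<open>\<delta> > 0\<close> by simp
    obtain s where "s \<in> {-1, 1}" "slope_on g s {t-\<delta>..t+\<delta>}"
      using unit_slope_piecesD[OF assms \<open>t - \<delta> < t + \<delta>\<close> free'] by blast
    moreover have "{t-\<delta>..t} \<subseteq> {t-\<delta>..t+\<delta>}" "{t..t+\<delta>} \<subseteq> {t-\<delta>..t+\<delta>}" using \<open>\<delta> > 0\<close> by auto
    ultimately show thesis using that[of \<delta> s s] \<open>\<delta> > 0\<close> slope_on_subset by blast
  qed
qed

lemma local_maxima_uminus: "local_maxima g = local_minima (\<lambda>x. - g x)"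
  unfolding local_maxima_def local_minima_def by simp

lemma local_minima_iff_slopes:
  assumes "\<delta> > 0" and left: "slope_on g s1 {t-\<delta>..t}" and right: "slope_on g s2 {t..t+\<delta>}"
  shows "t \<in> local_minima g \<longleftrightarrow> s1 \<le> 0 \<and> 0 \<le> s2"
proof -
  have gl: "g y = g t + s1 * (y - t)" if "t - \<delta> \<le> y" "y \<le> t" for y
    using slope_onD[OF left, of t y] that \<open>\<delta> > 0\<close> by simp
  have gr: "g y = g t + s2 * (y - t)" if "t \<le> y" "y \<le> t + \<delta>" for y
    using slope_onD[OF right, of t y] that \<open>\<delta> > 0\<close> by simp
  show ?thesis
  proof
    assume "t \<in> local_minima g"
    then obtain d where "d > 0" and min: "\<And>y. \<bar>y - t\<bar> < d \<Longrightarrow> g t \<le> g y"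
      unfolding local_minima_def by blast
    define e where "e = min d \<delta> / 2"
    have e: "0 < e" "e < d" "e \<le> \<delta>" using \<open>d > 0\<close> \<open>\<delta> > 0\<close> by (auto simp: e_def)
    have "g t \<le> g (t - e)" "g t \<le> g (t + e)" using min e by auto
    moreover have "g (t - e) = g t - s1 * e" "g (t + e) = g t + s2 * e"
      using gl[of "t - e"] gr[of "t + e"] e by auto
    ultimately have "s1 * e \<le> 0" "0 \<le> s2 * e" by linarith+
    then show "s1 \<le> 0 \<and> 0 \<le> s2" using \<open>0 < e\<close> by (simp add: mult_le_0_iff zero_le_mult_iff)
  next
    assume s: "s1 \<le> 0 \<and> 0 \<le> s2"
    have "g t \<le> g y" if "\<bar>y - t\<bar> < \<delta>" for y
    proof (cases "y \<le> t")
      case True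
      then show ?thesis using gl[of y] that s by (simp add: mult_nonpos_nonpos)
    next
      case False
      then show ?thesis using gr[of y] that s by simp
    qed
    then show "t \<in> local_minima g" unfolding local_minima_def using \<open>\<delta> > 0\<close> by blast
  qed
qed

lemma local_maxima_iff_slopes:
  assumes "\<delta> > 0" "slope_on g s1 {t-\<delta>..t}" "slope_on g s2 {t..t+\<delta>}"
  shows "t \<in> local_maxima g \<longleftrightarrow> 0 \<le> s1 \<and> s2 \<le> 0"
  using local_minima_iff_slopes[OF assms(1) slope_on_uminus[OF assms(2)] slope_on_uminus[OF assms(3)]]
  by (simp add: local_maxima_uminus)

lemma local_extrema_subset:
  assumes "unit_slope_pieces g T"
  shows "local_minima g \<subseteq> T" "local_maxima g \<subseteq> T"
proof -
  have "t \<notin> local_minima g \<and> t \<notin> local_maxima g" if "t \<notin> T" for t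
  proof -
    obtain \<delta> s1 s2 where "\<delta> > 0" "s1 \<in> {-1, 1}" "s2 \<in> {-1, 1}"
      "slope_on g s1 {t-\<delta>..t}" "slope_on g s2 {t..t+\<delta>}" "t \<notin> T \<Longrightarrow> s1 = s2"
      using unit_slope_pieces_local[OF assms] by metis
    then have "\<not> (s1 \<le> 0 \<and> 0 \<le> s2)" "\<not> (0 \<le> s1 \<and> s2 \<le> 0)" using that by auto
    then show ?thesis
      using local_minima_iff_slopes[OF \<open>\<delta> > 0\<close>] local_maxima_iff_slopes[OF \<open>\<delta> > 0\<close>]
        \<open>slope_on g s1 {t-\<delta>..t}\<close> \<open>slope_on g s2 {t..t+\<delta>}\<close>
      by blast
  qed
  then show "local_minima g \<subseteq> T" "local_maxima g \<subseteq> T" by auto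
qed

lemma finite_local_extrema:
  assumes "unit_slope_pieces g T"
  shows "finite (local_minima g)" "finite (local_maxima g)"
  using local_extrema_subset[OF assms] unit_slope_pieces_finite[OF assms] by (auto intro: finite_subset)

lemma unit_slope_pieces_shift:
  assumes "unit_slope_pieces g T"
  shows "unit_slope_pieces (\<lambda>x. g (x - e) + c) ((\<lambda>x. x + e) ` T)"
  unfolding unit_slope_pieces_def
proof (intro conjI allI impI)
  show "finite ((\<lambda>x. x + e) ` T)" using assms by (simp add: unit_slope_pieces_def)
  fix p q :: real assume pq: "p < q \<and> {p<..<q} \<inter> (\<lambda>x. x + e) ` T = {}"
  then have "{p-e<..<q-e} \<inter> T = {}" by (force simp: image_iff)
  moreover have "p - e < q - e" using pq by simp
  ultimately obtain s where "s \<in> {-1, 1}" and s: "slope_on g s {p-e..q-e}"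
    using unit_slope_piecesD[OF assms] by blast
  have "g (y - e) + c = g (x - e) + c + s * (y - x)" if "x \<in> {p..q}" "y \<in> {p..q}" for x y
    using slope_onD[OF s, of "x - e" "y - e"] that by simp
  then have "slope_on (\<lambda>x. g (x - e) + c) s {p..q}" unfolding slope_on_def by blast
  with \<open>s \<in> {-1, 1}\<close> show "\<exists>s\<in>{-1, 1}. slope_on (\<lambda>x. g (x - e) + c) s {p..q}" by blast
qed

lemma unit_slope_pieces_uminus:
  assumes "unit_slope_pieces g T"
  shows "unit_slope_pieces (\<lambda>x. - g x) T"
proof -
  have "\<exists>s\<in>{-1, 1}. slope_on (\<lambda>x. - g x) s {p..q}" if "\<exists>s\<in>{-1, 1}. slope_on g s {p..q}" for p q
  proof -
    from that obtain s where "s \<in> {-1, 1}" "slope_on g s {p..q}" by blast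
    then have "- s \<in> {-1, 1}" "slope_on (\<lambda>x. - g x) (- s) {p..q}" by (auto intro: slope_on_uminus)
    then show ?thesis by blast
  qed
  then show ?thesis using assms unfolding unit_slope_pieces_def by blast
qed

lemma unit_slope_pieces_line: "unit_slope_pieces (\<lambda>x. x + b) {}"
  unfolding unit_slope_pieces_def slope_on_def by (auto intro: bexI[of _ 1])

lemma affine_sign_cases:
  assumes "p < q" and h: "slope_on h k {p..q}"
  shows "(\<forall>x\<in>{p..q}. h x \<le> 0) \<or> (\<forall>x\<in>{p..q}. 0 \<le> h x) \<or> (\<exists>x0\<in>{p<..<q}. h x0 = 0 \<and> k \<noteq> 0)"
proof -
  have hx: "h x = h p + k * (x - p)" if "x \<in> {p..q}" for x
    using slope_onD[OF h, of p x] that \<open>p < q\<close> by simp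
  have hq: "h q = h p + k * (q - p)" using hx[of q] \<open>p < q\<close> by simp
  have between: "min (h p) (h q) \<le> h x \<and> h x \<le> max (h p) (h q)" if "x \<in> {p..q}" for x
  proof (cases "k \<ge> 0")
    case True
    then have "k * (x - p) \<le> k * (q - p)" "0 \<le> k * (x - p)" using that by (auto intro: mult_left_mono)
    then show ?thesis using hx[OF that] hq by linarith
  next
    case False
    then have "k * (q - p) \<le> k * (x - p)" "k * (x - p) \<le> 0"
      using that by (auto intro: mult_left_mono_neg simp: mult_nonpos_nonneg)
    then show ?thesis using hx[OF that] hq by linarith
  qed
  consider "max (h p) (h q) \<le> 0" | "0 \<le> min (h p) (h q)" | "h p < 0" "0 < h q" | "h q < 0" "0 < h p"
    by linarith
  then show ?thesis
  proof cases
    case 1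
    then show ?thesis using between by fastforce
  next
    case 2
    then show ?thesis using between by fastforce
  next
    case 3
    then have "0 < k * (q - p)" using hq by linarith
    then have "k > 0" using \<open>p < q\<close> by (simp add: zero_less_mult_iff)
    define x0 where "x0 = p - h p / k"
    have "p < x0" "x0 < q" using 3 hq \<open>k > 0\<close> by (auto simp: x0_def field_simps)
    moreover have "h x0 = 0" using hx[of x0] calculation \<open>k > 0\<close> by (simp add: x0_def)
    ultimately show ?thesis using \<open>k > 0\<close> by auto
  next
    case 4
    then have "k * (q - p) < 0" using hq by linarith
    then have "k < 0" using \<open>p < q\<close> by (simp add: mult_less_0_iff)
    define x0 where "x0 = p - h p / k"
    have "p < x0" "x0 < q" using 4 hq \<open>k < 0\<close> by (auto simp: x0_def field_simps)
    moreover have "h x0 = 0" using hx[of x0] calculation \<open>k < 0\<close> by (simp add: x0_def)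
    ultimately show ?thesis using \<open>k < 0\<close> by auto
  qed
qed

lemma affine_leaves_right:
  assumes "slope_on h k {p..q}" "x0 \<in> {p<..<q}" "k \<noteq> 0" "\<delta> > 0"
  shows "\<exists>v\<in>{x0<..<x0+\<delta>}. h v \<noteq> h x0"
proof -
  obtain e where e: "0 < e" "e \<le> \<delta>" "x0 + e \<le> q"
    using assms(2,4) by (intro that[of "min \<delta> (q - x0)"]) auto
  have "h (x0 + e / 2) = h x0 + k * (e / 2)"
    using slope_onD[OF assms(1), of x0 "x0 + e / 2"] assms(2) e by simp
  then have "h (x0 + e / 2) \<noteq> h x0" using assms(3) \<open>0 < e\<close> by simp
  moreover have "x0 + e / 2 \<in> {x0<..<x0+\<delta>}" using e by auto
  ultimately show ?thesis by blast
qed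

lemma finite_if_separated:
  fixes C U :: "real set"
  assumes "finite U" and sep: "\<And>x y. x \<in> C \<Longrightarrow> y \<in> C \<Longrightarrow> x < y \<Longrightarrow> \<exists>t\<in>U. x < t \<and> t < y"
  shows "finite C"
proof -
  have "inj_on (\<lambda>x. {t\<in>U. x < t}) C"
  proof (rule inj_onI)
    fix x y assume "x \<in> C" "y \<in> C" and eq: "{t\<in>U. x < t} = {t\<in>U. y < t}"
    have False if uv: "u \<in> C" "v \<in> C" "u < v" and same: "{t\<in>U. u < t} = {t\<in>U. v < t}" for u v
    proof -
      obtain t where "t \<in> U" "u < t" "t < v" using sep[OF uv] by blast
      then have "t \<in> {t\<in>U. v < t}" unfolding same[symmetric] by simp
      then show False using \<open>t < v\<close> by simp
    qed
    then show "x = y" using \<open>x \<in> C\<close> \<open>y \<in> C\<close> eq by (cases x y rule: linorder_cases) auto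
  qed
  moreover have "(\<lambda>x. {t\<in>U. x < t}) ` C \<subseteq> Pow U" by blast
  moreover have "finite (Pow U)" using assms(1) by simp
  ultimately show ?thesis by (rule inj_on_finite)
qed

definition parting_points :: "(real \<Rightarrow> real) \<Rightarrow> (real \<Rightarrow> real) \<Rightarrow> real set" where
  "parting_points f g = {u. f u = g u \<and> (\<forall>\<delta>>0. \<exists>v\<in>{u<..<u+\<delta>}. f v \<noteq> g v)}"

lemma parting_points_uminus: "parting_points (\<lambda>x. - f x) (\<lambda>x. - g x) = parting_points f g"
  unfolding parting_points_def by simp

lemma finite_parting_points:
  assumes f: "unit_slope_pieces f T1" and g: "unit_slope_pieces g T2"
  shows "finite (parting_points f g)"
proof (rule finite_if_separated)
  show "finite (T1 \<union> T2)" using unit_slope_pieces_finite[OF f] unit_slope_pieces_finite[OF g] by simp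
  fix x y assume x: "x \<in> parting_points f g" and y: "y \<in> parting_points f g" and "x < y"
  show "\<exists>t\<in>T1 \<union> T2. x < t \<and> t < y"
  proof (rule ccontr)
    assume "\<not> (\<exists>t\<in>T1 \<union> T2. x < t \<and> t < y)"
    then have "{x<..<y} \<inter> T1 = {}" "{x<..<y} \<inter> T2 = {}" by auto
    then obtain s r where "slope_on f s {x..y}" "slope_on g r {x..y}"
      using unit_slope_piecesD[OF f \<open>x < y\<close>] unit_slope_piecesD[OF g \<open>x < y\<close>] by blast
    then have d: "slope_on (\<lambda>u. f u - g u) (s - r) {x..y}" by (rule slope_on_diff)
    have "f x = g x" "f y = g y" using x y by (auto simp: parting_points_def)
    then have "(s - r) * (y - x) = 0" using slope_onD[OF d, of x y] \<open>x < y\<close> by simp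
    then have "s = r" using \<open>x < y\<close> by simp
    have "f v = g v" if "v \<in> {x<..<y}" for v
      using slope_onD[OF d, of x v] that \<open>f x = g x\<close> \<open>s = r\<close> by simp
    moreover have "\<forall>\<delta>>0. \<exists>v\<in>{x<..<x+\<delta>}. f v \<noteq> g v" using x by (simp add: parting_points_def)
    then obtain v where "v \<in> {x<..<y}" "f v \<noteq> g v" using \<open>x < y\<close> by (auto dest: spec[of _ "y - x"])
    ultimately show False by simp
  qed
qed

lemma unit_slope_pieces_min:
  assumes f: "unit_slope_pieces f T1" and g: "unit_slope_pieces g T2"
  shows "unit_slope_pieces (\<lambda>x. min (f x) (g x)) (T1 \<union> T2 \<union> parting_points f g)"
  unfolding unit_slope_pieces_def
proof (intro conjI allI impI)
  show "finite (T1 \<union> T2 \<union> parting_points f g)"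
    using unit_slope_pieces_finite[OF f] unit_slope_pieces_finite[OF g] finite_parting_points[OF f g] by simp
  fix p q :: real assume pq: "p < q \<and> {p<..<q} \<inter> (T1 \<union> T2 \<union> parting_points f g) = {}"
  then have "{p<..<q} \<inter> T1 = {}" "{p<..<q} \<inter> T2 = {}" by auto
  then obtain s r where s: "s \<in> {-1, 1}" "slope_on f s {p..q}" and r: "r \<in> {-1, 1}" "slope_on g r {p..q}"
    using unit_slope_piecesD[OF f] unit_slope_piecesD[OF g] pq by meson
  have d: "slope_on (\<lambda>u. f u - g u) (s - r) {p..q}" using s(2) r(2) by (rule slope_on_diff)
  have "\<not> (\<exists>x0\<in>{p<..<q}. f x0 - g x0 = 0 \<and> s - r \<noteq> 0)"
  proof
    assume "\<exists>x0\<in>{p<..<q}. f x0 - g x0 = 0 \<and> s - r \<noteq> 0"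
    then obtain x0 where x0: "x0 \<in> {p<..<q}" "f x0 = g x0" "s - r \<noteq> 0" by auto
    then have "x0 \<in> parting_points f g"
      using affine_leaves_right[OF d x0(1) x0(3)] by (simp add: parting_points_def)
    then show False using pq x0(1) by blast
  qed
  then have "(\<forall>x\<in>{p..q}. f x - g x \<le> 0) \<or> (\<forall>x\<in>{p..q}. 0 \<le> f x - g x)"
    using affine_sign_cases[OF _ d] pq by blast
  then show "\<exists>s\<in>{-1, 1}. slope_on (\<lambda>x. min (f x) (g x)) s {p..q}"
  proof
    assume "\<forall>x\<in>{p..q}. f x - g x \<le> 0"
    then have "slope_on (\<lambda>x. min (f x) (g x)) s {p..q} \<longleftrightarrow> slope_on f s {p..q}"
      by (intro slope_on_cong) auto
    then show ?thesis using s by blast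
  next
    assume "\<forall>x\<in>{p..q}. 0 \<le> f x - g x"
    then have "slope_on (\<lambda>x. min (f x) (g x)) r {p..q} \<longleftrightarrow> slope_on g r {p..q}"
      by (intro slope_on_cong) auto
    then show ?thesis using r by blast
  qed
qed

lemma unit_slope_pieces_max:
  assumes "unit_slope_pieces f T1" "unit_slope_pieces g T2"
  shows "unit_slope_pieces (\<lambda>x. max (f x) (g x)) (T1 \<union> T2 \<union> parting_points f g)"
proof -
  have "unit_slope_pieces (\<lambda>x. - min (- f x) (- g x)) (T1 \<union> T2 \<union> parting_points f g)"
    using unit_slope_pieces_uminus[OF unit_slope_pieces_min[OF
        unit_slope_pieces_uminus[OF assms(1)] unit_slope_pieces_uminus[OF assms(2)]]]
    by (simp only: parting_points_uminus)
  moreover have "(\<lambda>x. - min (- f x) (- g x)) = (\<lambda>x. max (f x) (g x))" by (auto simp: min_def max_def)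
  ultimately show ?thesis by simp
qed

lemma local_minima_shift_iff:
  "x \<in> local_minima (\<lambda>z. f (z - e) + c) \<longleftrightarrow> x - e \<in> local_minima f"
proof -
  have "(\<forall>y. \<bar>y - x\<bar> < d \<longrightarrow> f (x - e) \<le> f (y - e)) \<longleftrightarrow> (\<forall>y. \<bar>y - (x - e)\<bar> < d \<longrightarrow> f (x - e) \<le> f y)" for d
  proof
    assume "\<forall>y. \<bar>y - x\<bar> < d \<longrightarrow> f (x - e) \<le> f (y - e)"
    then show "\<forall>y. \<bar>y - (x - e)\<bar> < d \<longrightarrow> f (x - e) \<le> f y"
      by (metis add_diff_cancel_right' diff_diff_eq2)
  next
    assume "\<forall>y. \<bar>y - (x - e)\<bar> < d \<longrightarrow> f (x - e) \<le> f y"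
    then show "\<forall>y. \<bar>y - x\<bar> < d \<longrightarrow> f (x - e) \<le> f (y - e)"
      by (metis diff_diff_eq2 diff_add_cancel)
  qed
  then show ?thesis unfolding local_minima_def by simp
qed

lemma local_extrema_shift:
  "local_minima (\<lambda>z. f (z - e) + c) = (\<lambda>x. x + e) ` local_minima f"
  "local_maxima (\<lambda>z. f (z - e) + c) = (\<lambda>x. x + e) ` local_maxima f"
proof -
  have shift_set: "{x. x - e \<in> M} = (\<lambda>x. x + e) ` M" for M :: "real set"
    by (auto simp: image_iff) (metis diff_add_cancel)
  show "local_minima (\<lambda>z. f (z - e) + c) = (\<lambda>x. x + e) ` local_minima f"
    using local_minima_shift_iff[of _ f e c] shift_set by blast
  have "(\<lambda>z. - (f (z - e) + c)) = (\<lambda>z. - f (z - e) + - c)" by simp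
  then show "local_maxima (\<lambda>z. f (z - e) + c) = (\<lambda>x. x + e) ` local_maxima f"
    using local_minima_shift_iff[of _ "\<lambda>x. - f x" e "- c"] shift_set
    unfolding local_maxima_uminus by auto
qed

lemma zigzag_weight_shift: "zigzag_weight (\<lambda>z. f (z - e) + c) (x + e) = zigzag_weight f x"
proof -
  have inj: "inj_on (\<lambda>x::real. x + e) A" for A by (rule inj_onI) simp
  have minus: "(\<lambda>x. x + e) ` local_minima f - {x + e} = (\<lambda>x. x + e) ` (local_minima f - {x})"
    by auto
  show ?thesis
    unfolding zigzag_weight_def local_extrema_shift minus
    by (simp add: prod.reindex[OF inj] image_iff)
qed

lemma local_minima_cong:
  assumes "r > 0" "\<And>y. \<bar>y - x\<bar> < r \<Longrightarrow> f y = g y" "x \<in> local_minima f"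
  shows "x \<in> local_minima g"
proof -
  obtain d where "d > 0" and d: "\<And>y. \<bar>y - x\<bar> < d \<Longrightarrow> f x \<le> f y"
    using assms(3) unfolding local_minima_def by blast
  have "g x \<le> g y" if "\<bar>y - x\<bar> < min d r" for y
    using d[of y] assms(2)[of y] assms(2)[of x] that \<open>r > 0\<close> by simp
  then show ?thesis unfolding local_minima_def using \<open>d > 0\<close> \<open>r > 0\<close>
    by (intro CollectI exI[of _ "min d r"]) simp
qed

lemma local_extrema_cong:
  assumes "r > 0" "\<And>y. \<bar>y - x\<bar> < r \<Longrightarrow> f y = g y"
  shows "x \<in> local_minima f \<longleftrightarrow> x \<in> local_minima g" "x \<in> local_maxima f \<longleftrightarrow> x \<in> local_maxima g"
  using local_minima_cong[of r x f g] local_minima_cong[of r x g f]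
    local_minima_cong[of r x "\<lambda>x. - f x" "\<lambda>x. - g x"] local_minima_cong[of r x "\<lambda>x. - g x" "\<lambda>x. - f x"]
    assms unfolding local_maxima_uminus by auto

definition rises_to :: "(real \<Rightarrow> real) \<Rightarrow> real \<Rightarrow> bool" where
  "rises_to g c \<longleftrightarrow> (\<exists>\<delta>>0. slope_on g 1 {c-\<delta>..c})"

lemma rises_to_iff_slope:
  assumes "\<delta> > 0" "slope_on g s {c-\<delta>..c}"
  shows "rises_to g c \<longleftrightarrow> s = 1"
proof
  assume "rises_to g c"
  then obtain \<delta>' where "\<delta>' > 0" "slope_on g 1 {c-\<delta>'..c}" unfolding rises_to_def by blast
  moreover have "{c - min \<delta> \<delta>'..c} \<subseteq> {c-\<delta>..c}" "{c - min \<delta> \<delta>'..c} \<subseteq> {c-\<delta>'..c}" by auto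
  ultimately have "slope_on g s {c - min \<delta> \<delta>'..c}" "slope_on g 1 {c - min \<delta> \<delta>'..c}"
    using assms(2) slope_on_subset by blast+
  then show "s = 1" by (rule slope_on_unique[of _ _ _ _ "c - min \<delta> \<delta>'" c]) (use assms(1) \<open>\<delta>' > 0\<close> in auto)
qed (use assms in \<open>auto simp: rises_to_def\<close>)

lemma extrema_before_piece:
  assumes pieces: "unit_slope_pieces g T" and "t < c" and piece: "slope_on g s {t..c}"
  obtains s1 :: real where "s1 \<in> {-1, 1}" "rises_to g t \<longleftrightarrow> s1 = 1"
    "t \<in> local_minima g \<longleftrightarrow> s1 \<le> 0 \<and> 0 \<le> s" "t \<in> local_maxima g \<longleftrightarrow> 0 \<le> s1 \<and> s \<le> 0"
proof -
  obtain \<delta> s1 where "\<delta> > 0" "s1 \<in> {-1, 1}" and left: "slope_on g s1 {t-\<delta>..t}"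
    using unit_slope_pieces_local[OF pieces] by metis
  obtain e where "0 < e" "e \<le> \<delta>" "e \<le> c - t"
    using \<open>\<delta> > 0\<close> \<open>t < c\<close> by (intro that[of "min \<delta> (c - t)"]) auto
  then have left': "slope_on g s1 {t-e..t}" and right: "slope_on g s {t..t+e}"
    using slope_on_subset[OF left] slope_on_subset[OF piece] by auto
  show thesis
    using that[OF \<open>s1 \<in> {-1, 1}\<close> rises_to_iff_slope[OF \<open>0 < e\<close> left']
        local_minima_iff_slopes[OF \<open>0 < e\<close> left' right] local_maxima_iff_slopes[OF \<open>0 < e\<close> left' right]] .
qed

lemma finite_breakpoints_induct [consumes 2, case_names gap step]:
  fixes T :: "real set"
  assumes "finite T" "a < c"
    and gap: "\<And>c. a < c \<Longrightarrow> {a<..<c} \<inter> T = {} \<Longrightarrow> P c"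
    and step: "\<And>t c. a < t \<Longrightarrow> t < c \<Longrightarrow> t \<in> T \<Longrightarrow> {t<..<c} \<inter> T = {} \<Longrightarrow> P t \<Longrightarrow> P c"
  shows "P c"
proof -
  have "\<forall>c. a < c \<longrightarrow> card (T \<inter> {a<..<c}) = n \<longrightarrow> P c" for n
  proof (induction n)
    case 0
    then show ?case using gap \<open>finite T\<close> by auto
  next
    case (Suc n)
    show ?case
    proof (intro allI impI)
      fix c assume "a < c" and card: "card (T \<inter> {a<..<c}) = Suc n"
      have fin: "finite (T \<inter> {a<..<c})" using \<open>finite T\<close> by simp
      then have ne: "T \<inter> {a<..<c} \<noteq> {}" using card by auto
      define t where "t = Max (T \<inter> {a<..<c})"
      have t: "t \<in> T \<inter> {a<..<c}" unfolding t_def using fin ne by (rule Max_in)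
      have above: "x \<le> t" if "x \<in> T \<inter> {a<..<c}" for x unfolding t_def using fin that by (rule Max_ge)
      have "T \<inter> {a<..<t} = T \<inter> {a<..<c} - {t}" using t above by force
      then have "card (T \<inter> {a<..<t}) = n" using card t fin by simp
      then have "P t" using Suc.IH t by auto
      moreover have "{t<..<c} \<inter> T = {}" using above t by force
      ultimately show "P c" using step t by auto
    qed
  qed
  then show ?thesis using \<open>a < c\<close> by blast
qed

section \<open>The rise integral\<close>

lemma has_integral_inverse_square:
  fixes a c w :: real
  assumes "a \<le> c" "c < w"
  shows "((\<lambda>u. 1 / (w - u)^2) has_integral (1 / (w - c) - 1 / (w - a))) {a..c}"
proof (rule fundamental_theorem_of_calculus[OF assms(1)])
  fix u assume "u \<in> {a..c}"
  then have "w - u \<noteq> 0" using assms by auto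
  then have "((\<lambda>u. 1 / (w - u)) has_real_derivative 1 / (w - u)^2) (at u within {a..c})"
    by (auto intro!: derivative_eq_intros simp: power2_eq_square)
  then show "((\<lambda>u. 1 / (w - u)) has_vector_derivative 1 / (w - u)^2) (at u within {a..c})"
    by (simp add: has_real_derivative_iff_has_vector_derivative)
qed

lemma has_integral_inverse:
  fixes a c w :: real
  assumes "a \<le> c" "c < w"
  shows "((\<lambda>u. 1 / (w - u)) has_integral (ln (w - a) - ln (w - c))) {a..c}"
proof -
  have "((\<lambda>u. 1 / (w - u)) has_integral (- ln (w - c) - - ln (w - a))) {a..c}"
  proof (rule fundamental_theorem_of_calculus[OF assms(1)])
    fix u assume "u \<in> {a..c}"
    then have "w - u > 0" using assms by auto
    then have "((\<lambda>u. - ln (w - u)) has_real_derivative 1 / (w - u)) (at u within {a..c})"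
      by (auto intro!: derivative_eq_intros simp: divide_simps)
    then show "((\<lambda>u. - ln (w - u)) has_vector_derivative 1 / (w - u)) (at u within {a..c})"
      by (simp add: has_real_derivative_iff_has_vector_derivative)
  qed
  then show ?thesis by simp
qed

lemma partial_fractions_square:
  fixes d :: real
  assumes "d \<noteq> 0"
  shows "K * (1 / d^2) - m * (1 / d) = (K - m * d) / d^2"
  using assms by (simp add: field_simps power2_eq_square)

text \<open>The integral of (1 + g'(u)) / (w - u) over [a, c], integrated by parts so that only values
  of g occur.\<close>

definition rise_integral :: "(real \<Rightarrow> real) \<Rightarrow> real \<Rightarrow> real \<Rightarrow> real \<Rightarrow> real" where
  "rise_integral g w a c =
     (g c + c) / (w - c) - (g a + a) / (w - a) - integral {a..c} (\<lambda>u. (g u + u) / (w - u)^2)"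

lemma rise_integral_affine:
  assumes "c < c'" "c' < w" and g: "slope_on g s {c..c'}"
  shows "rise_integral g w c c' = (1 + s) * (ln (w - c) - ln (w - c'))"
proof -
  define K where "K = g c + c + (1 + s) * (w - c)"
  have gu: "g u + u = K - (1 + s) * (w - u)" if "u \<in> {c..c'}" for u
    using slope_onD[OF g, of c u] that assms(1) by (simp add: K_def algebra_simps)
  have I: "((\<lambda>u. K * (1 / (w - u)^2) - (1 + s) * (1 / (w - u))) has_integral
      K * (1 / (w - c') - 1 / (w - c)) - (1 + s) * (ln (w - c) - ln (w - c'))) {c..c'}"
    using assms(1,2)
    by (intro has_integral_diff has_integral_mult_right has_integral_inverse_square has_integral_inverse) auto
  have eq: "K * (1 / (w - u)^2) - (1 + s) * (1 / (w - u)) = (g u + u) / (w - u)^2" if "u \<in> {c..c'}" for u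
  proof -
    have "w - u \<noteq> 0" using that assms by auto
    then have "K * (1 / (w - u)^2) - (1 + s) * (1 / (w - u)) = (K - (1 + s) * (w - u)) / (w - u)^2"
      by (rule partial_fractions_square)
    then show ?thesis by (simp only: gu[OF that])
  qed
  have "integral {c..c'} (\<lambda>u. (g u + u) / (w - u)^2)
      = K * (1 / (w - c') - 1 / (w - c)) - (1 + s) * (ln (w - c) - ln (w - c'))"
    by (intro integral_unique has_integral_eq[OF eq I])
  moreover have "(g c + c) / (w - c) = K / (w - c) - (1 + s)"
    "(g c' + c') / (w - c') = K / (w - c') - (1 + s)"
    using gu[of c] gu[of c'] assms by (simp_all add: diff_divide_distrib)
  ultimately show ?thesis
    unfolding rise_integral_def by (simp add: right_diff_distrib)
qed

lemma rise_integral_combine: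
  assumes "a \<le> t" "t \<le> c" "c < w" "continuous_on {a..c} g"
  shows "rise_integral g w a c = rise_integral g w a t + rise_integral g w t c"
proof -
  have "continuous_on {a..c} (\<lambda>u. (g u + u) / (w - u)^2)"
    using assms by (intro continuous_intros) auto
  then have "(\<lambda>u. (g u + u) / (w - u)^2) integrable_on {a..c}"
    by (rule integrable_continuous_interval)
  then have "integral {a..t} (\<lambda>u. (g u + u) / (w - u)^2) + integral {t..c} (\<lambda>u. (g u + u) / (w - u)^2)
      = integral {a..c} (\<lambda>u. (g u + u) / (w - u)^2)"
    by (rule Henstock_Kurzweil_Integration.integral_combine[OF assms(1,2)])
  then show ?thesis unfolding rise_integral_def by simp
qed

lemma rise_integral_diff_le:
  assumes "a \<le> c" "c < w"
    and cont: "continuous_on {a..c} g" "continuous_on {a..c} h" "continuous_on {a..c} d"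
    and below: "\<And>u. u \<in> {a..c} \<Longrightarrow> d u \<le> h u - g u"
  shows "rise_integral h w a c - rise_integral g w a c
    \<le> (h c - g c) / (w - c) - (h a - g a) / (w - a) - integral {a..c} (\<lambda>u. d u / (w - u)^2)"
proof -
  have int: "(\<lambda>u. (f u + u) / (w - u)^2) integrable_on {a..c}" if "continuous_on {a..c} f" for f
    using that assms(1,2) by (intro integrable_continuous_interval continuous_intros) auto
  have "(\<lambda>u. d u / (w - u)^2) integrable_on {a..c}"
    using cont(3) assms(2) by (intro integrable_continuous_interval continuous_intros) auto
  moreover have "d u / (w - u)^2 \<le> (h u + u) / (w - u)^2 - (g u + u) / (w - u)^2" if "u \<in> {a..c}" for u
    using below[OF that] by (simp add: diff_divide_distrib[symmetric] divide_right_mono)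
  ultimately have "integral {a..c} (\<lambda>u. d u / (w - u)^2)
      \<le> integral {a..c} (\<lambda>u. (h u + u) / (w - u)^2 - (g u + u) / (w - u)^2)"
    using int[OF cont(2)] int[OF cont(1)]
    by (intro Henstock_Kurzweil_Integration.integral_le integrable_diff) auto
  also have "\<dots> = integral {a..c} (\<lambda>u. (h u + u) / (w - u)^2) - integral {a..c} (\<lambda>u. (g u + u) / (w - u)^2)"
    using int[OF cont(2)] int[OF cont(1)] by (rule Henstock_Kurzweil_Integration.integral_diff)
  finally have integrals: "integral {a..c} (\<lambda>u. d u / (w - u)^2)
      \<le> integral {a..c} (\<lambda>u. (h u + u) / (w - u)^2) - integral {a..c} (\<lambda>u. (g u + u) / (w - u)^2)" .
  have ends: "(h x + x) / (w - x) - (g x + x) / (w - x) = (h x - g x) / (w - x)" for x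
    by (simp add: diff_divide_distrib[symmetric])
  show ?thesis unfolding rise_integral_def using integrals ends[of a] ends[of c] by linarith
qed

lemma integral_clipped_ramp:
  fixes a z w \<epsilon> :: real
  assumes "a \<le> z - \<epsilon>" "\<epsilon> > 0" "z < w"
  shows "integral {a..z} (\<lambda>u. max (-\<epsilon>) (u - z) / (w - u)^2) = \<epsilon> / (w - a) + ln (w - z) - ln (w - z + \<epsilon>)"
proof -
  have "((\<lambda>u. (-\<epsilon>) * (1 / (w - u)^2)) has_integral (-\<epsilon>) * (1 / (w - (z - \<epsilon>)) - 1 / (w - a))) {a..z-\<epsilon>}"
    using assms by (intro has_integral_mult_right has_integral_inverse_square) auto
  then have flat: "((\<lambda>u. max (-\<epsilon>) (u - z) / (w - u)^2) has_integral
      (-\<epsilon>) * (1 / (w - (z - \<epsilon>)) - 1 / (w - a))) {a..z-\<epsilon>}"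
    by (rule has_integral_eq[rotated]) auto
  have "((\<lambda>u. (w - z) * (1 / (w - u)^2) - 1 * (1 / (w - u))) has_integral
      (w - z) * (1 / (w - z) - 1 / (w - (z - \<epsilon>))) - 1 * (ln (w - (z - \<epsilon>)) - ln (w - z))) {z-\<epsilon>..z}"
    using assms
    by (intro has_integral_diff has_integral_mult_right has_integral_inverse_square has_integral_inverse) auto
  moreover have "(w - z) * (1 / (w - u)^2) - 1 * (1 / (w - u)) = max (-\<epsilon>) (u - z) / (w - u)^2"
    if "u \<in> {z-\<epsilon>..z}" for u
  proof -
    have "w - u \<noteq> 0" using that assms by auto
    then have "(w - z) * (1 / (w - u)^2) - 1 * (1 / (w - u)) = (w - z - 1 * (w - u)) / (w - u)^2"
      by (rule partial_fractions_square)
    moreover have "max (-\<epsilon>) (u - z) = w - z - 1 * (w - u)" using that by auto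
    ultimately show ?thesis by simp
  qed
  ultimately have ramp: "((\<lambda>u. max (-\<epsilon>) (u - z) / (w - u)^2) has_integral
      (w - z) * (1 / (w - z) - 1 / (w - (z - \<epsilon>))) - 1 * (ln (w - (z - \<epsilon>)) - ln (w - z))) {z-\<epsilon>..z}"
    by (rule has_integral_eq[rotated])
  have "((\<lambda>u. max (-\<epsilon>) (u - z) / (w - u)^2) has_integral
      (-\<epsilon>) * (1 / (w - (z - \<epsilon>)) - 1 / (w - a))
      + ((w - z) * (1 / (w - z) - 1 / (w - (z - \<epsilon>))) - 1 * (ln (w - (z - \<epsilon>)) - ln (w - z)))) {a..z}"
    by (rule has_integral_combine[OF assms(1) _ flat ramp]) (use assms(2) in simp)
  then have "integral {a..z} (\<lambda>u. max (-\<epsilon>) (u - z) / (w - u)^2)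
      = (-\<epsilon>) * (1 / (w - (z - \<epsilon>)) - 1 / (w - a))
        + ((w - z) * (1 / (w - z) - 1 / (w - (z - \<epsilon>))) - 1 * (ln (w - (z - \<epsilon>)) - ln (w - z)))"
    by (rule integral_unique)
  also have "\<dots> = \<epsilon> / (w - a) + ln (w - z) - ln (w - z + \<epsilon>)"
  proof -
    have "(-\<epsilon>) * (1 / (p + \<epsilon>) - 1 / q) + (p * (1 / p - 1 / (p + \<epsilon>)) - 1 * (ln (p + \<epsilon>) - ln p))
        = \<epsilon> / q + ln p - ln (p + \<epsilon>)" if "p \<noteq> 0" "p + \<epsilon> \<noteq> 0" "q \<noteq> 0" for p q
    proof -
      have "p * (1 / p - 1 / (p + \<epsilon>)) = 1 - p / (p + \<epsilon>)" using that by (simp add: right_diff_distrib)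
      also have "\<dots> = \<epsilon> / (p + \<epsilon>)" using that(2) by (simp add: diff_divide_eq_iff)
      moreover have "(-\<epsilon>) * (1 / (p + \<epsilon>) - 1 / q) = \<epsilon> / q - \<epsilon> / (p + \<epsilon>)" by (simp add: algebra_simps)
      ultimately show ?thesis by simp
    qed
    moreover have "w - z \<noteq> 0" "w - z + \<epsilon> \<noteq> 0" "w - a \<noteq> 0" "w - (z - \<epsilon>) = w - z + \<epsilon>" using assms by auto
    ultimately show ?thesis by presburger
  qed
  finally show ?thesis .
qed

section \<open>Logarithm of the left factor of a weight\<close>

lemma sum_split_at_breakpoint:
  fixes E :: "'a::linorder set"
  assumes "finite E" "E \<inter> {t<..<c} = {}" "a < t" "t < c"
  shows "(\<Sum>x\<in>E \<inter> {a<..<c}. f x) = (\<Sum>x\<in>E \<inter> {a<..<t}. f x) + (if t \<in> E then f t else 0)"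
proof -
  have "E \<inter> {a<..<c} = E \<inter> {a<..<t} \<union> E \<inter> {t}"
    using assms(2-4) by (auto simp: disjoint_iff)
  moreover have "(\<Sum>x\<in>E \<inter> {t}. f x) = (if t \<in> E then f t else 0)" by (cases "t \<in> E") auto
  ultimately show ?thesis using assms(1) by (simp add: sum.union_disjoint add.commute)
qed

lemma log_extrema_sum_eq_rise_integral:
  assumes pieces: "unit_slope_pieces g T" and cont: "continuous_on UNIV g"
    and T_right: "\<forall>t\<in>T. a < t" and falls: "slope_on g (-1) {..a}" and "a < c" "c < w"
  shows "(\<Sum>y\<in>local_maxima g \<inter> {a<..<c}. ln (w - y)) - (\<Sum>x\<in>local_minima g \<inter> {a<..<c}. ln (w - x))
    + (if rises_to g c then ln (w - c) else 0) = - rise_integral g w a c / 2"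
proof -
  \<comment> \<open>the last term anticipates the maximum at c that appears if g turns down right after c\<close>
  define F where "F c = (\<Sum>y\<in>local_maxima g \<inter> {a<..<c}. ln (w - y))
    - (\<Sum>x\<in>local_minima g \<inter> {a<..<c}. ln (w - x)) + (if rises_to g c then ln (w - c) else 0)" for c
  note fin = finite_local_extrema[OF pieces]
  have "c < w \<longrightarrow> F c = - rise_integral g w a c / 2"
    using unit_slope_pieces_finite[OF pieces] \<open>a < c\<close>
  proof (induction c rule: finite_breakpoints_induct)
    case (gap c)
    show ?case
    proof
      assume "c < w"
      have "{a-1<..<c} \<inter> T = {}" using gap(2) T_right by fastforce
      then obtain s where "s \<in> {-1, 1}" and s: "slope_on g s {a-1..c}"
        using unit_slope_piecesD[OF pieces, of "a - 1" c] gap(1) by auto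
      have "slope_on g s {a-1..a}" "slope_on g (-1) {a-1..a}"
        using slope_on_subset[OF s] slope_on_subset[OF falls] gap(1) by auto
      then have "s = -1" by (rule slope_on_unique[of _ _ _ _ "a - 1" a]) auto
      have "rises_to g c \<longleftrightarrow> s = 1"
        using rises_to_iff_slope[of "c - (a - 1)" g s c] s gap(1) by simp
      moreover have "rise_integral g w a c = 0"
        using rise_integral_affine[OF gap(1) \<open>c < w\<close> slope_on_subset[OF s]] \<open>s = -1\<close> by simp
      moreover have "local_maxima g \<inter> {a<..<c} = {}" "local_minima g \<inter> {a<..<c} = {}"
        using local_extrema_subset[OF pieces] gap(2) by auto
      ultimately show "F c = - rise_integral g w a c / 2" using \<open>s = -1\<close> by (simp add: F_def)
    qed
  next
    case (step t c)
    show ?case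
    proof
      assume "c < w"
      with step have IH: "F t = - rise_integral g w a t / 2" by auto
      obtain s where "s \<in> {-1, 1}" and s: "slope_on g s {t..c}"
        using unit_slope_piecesD[OF pieces step(2) step(4)] by blast
      obtain s1 :: real where "s1 \<in> {-1, 1}" "rises_to g t \<longleftrightarrow> s1 = 1"
        "t \<in> local_minima g \<longleftrightarrow> s1 \<le> 0 \<and> 0 \<le> s" "t \<in> local_maxima g \<longleftrightarrow> 0 \<le> s1 \<and> s \<le> 0"
        using extrema_before_piece[OF pieces step(2) s] by blast
      moreover have "rises_to g c \<longleftrightarrow> s = 1"
        using rises_to_iff_slope[of "c - t" g s c] s step(2) by simp
      moreover have "rise_integral g w a c = rise_integral g w a t + (1 + s) * (ln (w - t) - ln (w - c))"
        using rise_integral_combine[of a t c w g] rise_integral_affine[OF step(2) \<open>c < w\<close> s]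
          step(1,2) \<open>c < w\<close> continuous_on_subset[OF cont] by auto
      moreover have "local_maxima g \<inter> {t<..<c} = {}" "local_minima g \<inter> {t<..<c} = {}"
        using local_extrema_subset[OF pieces] step(4) by auto
      ultimately show "F c = - rise_integral g w a c / 2"
        using IH \<open>s1 \<in> {-1, 1}\<close> \<open>s \<in> {-1, 1}\<close> step(1,2)
        by (auto simp: F_def sum_split_at_breakpoint[OF fin(1)] sum_split_at_breakpoint[OF fin(2)]
            algebra_simps)
    qed
  qed
  then show ?thesis using \<open>c < w\<close> by (simp add: F_def)
qed

definition left_weight :: "(real \<Rightarrow> real) \<Rightarrow> real \<Rightarrow> real \<Rightarrow> real" where
  "left_weight g z w =
     (\<Prod>y\<in>local_maxima g \<inter> {..z}. w - y) / (\<Prod>x\<in>local_minima g \<inter> {..z}. w - x)"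

definition right_weight :: "(real \<Rightarrow> real) \<Rightarrow> real \<Rightarrow> real \<Rightarrow> real" where
  "right_weight g z w =
     (\<Prod>y\<in>local_maxima g - {..z}. w - y) / (\<Prod>x\<in>local_minima g - {w} - {..z}. w - x)"

lemma left_weight_pos: "z < w \<Longrightarrow> left_weight g z w > 0"
  unfolding left_weight_def by (auto intro!: prod_pos divide_pos_pos)

lemma zigzag_weight_split:
  assumes "finite (local_minima g)" "finite (local_maxima g)" "w \<in> local_minima g" "z < w"
  shows "zigzag_weight g w = left_weight g z w * right_weight g z w"
proof -
  have "(local_minima g - {w}) \<inter> {..z} = local_minima g \<inter> {..z}" using assms(4) by auto
  then have "(\<Prod>x\<in>local_minima g - {w}. w - x)
      = (\<Prod>x\<in>local_minima g \<inter> {..z}. w - x) * (\<Prod>x\<in>local_minima g - {w} - {..z}. w - x)"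
    using prod.Int_Diff[of "local_minima g - {w}" _ "{..z}"] assms(1) by simp
  moreover have "(\<Prod>y\<in>local_maxima g. w - y)
      = (\<Prod>y\<in>local_maxima g \<inter> {..z}. w - y) * (\<Prod>y\<in>local_maxima g - {..z}. w - y)"
    using prod.Int_Diff[of "local_maxima g" _ "{..z}"] assms(2) by simp
  ultimately show ?thesis
    unfolding zigzag_weight_def left_weight_def right_weight_def using assms(3) by simp
qed

lemma right_weight_cong:
  assumes "\<And>u. z < u \<Longrightarrow> g u = h u"
  shows "right_weight g z w = right_weight h z w"
proof -
  have "y \<in> local_minima g \<longleftrightarrow> y \<in> local_minima h" "y \<in> local_maxima g \<longleftrightarrow> y \<in> local_maxima h"
    if "z < y" for y
    using local_extrema_cong[of "y - z" y g h] assms that by auto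
  then have "local_maxima g - {..z} = local_maxima h - {..z}"
    "local_minima g - {w} - {..z} = local_minima h - {w} - {..z}"
    by auto
  then show ?thesis unfolding right_weight_def by simp
qed

lemma ln_left_weight_eq_sums:
  assumes "finite (local_minima g)" "finite (local_maxima g)" "z < w"
  shows "ln (left_weight g z w)
    = (\<Sum>y\<in>local_maxima g \<inter> {..z}. ln (w - y)) - (\<Sum>x\<in>local_minima g \<inter> {..z}. ln (w - x))"
proof -
  have pos: "(\<Prod>y\<in>local_maxima g \<inter> {..z}. w - y) > 0" "(\<Prod>x\<in>local_minima g \<inter> {..z}. w - x) > 0"
    using \<open>z < w\<close> by (auto intro!: prod_pos)
  have "ln (\<Prod>y\<in>E \<inter> {..z}. w - y) = (\<Sum>y\<in>E \<inter> {..z}. ln (w - y))" if "finite E" for E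
    using that \<open>z < w\<close> by (intro ln_prod) auto
  moreover have "ln (left_weight g z w)
      = ln (\<Prod>y\<in>local_maxima g \<inter> {..z}. w - y) - ln (\<Prod>x\<in>local_minima g \<inter> {..z}. w - x)"
    unfolding left_weight_def using pos by (simp add: ln_div)
  ultimately show ?thesis using assms(1,2) by simp
qed

lemma ln_left_weight:
  assumes pieces: "unit_slope_pieces g T" and cont: "continuous_on UNIV g"
    and T_right: "\<forall>t\<in>T. a < t" and falls: "slope_on g (-1) {..a}" and "a < z" "z < w"
    and "\<delta> > 0" and falls_after: "slope_on g (-1) {z..z+\<delta>}"
  shows "ln (left_weight g z w) = - rise_integral g w a z / 2"
proof -
  note fin = finite_local_extrema[OF pieces]
  obtain s1 :: real where "s1 \<in> {-1, 1}" "rises_to g z \<longleftrightarrow> s1 = 1"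
    "z \<in> local_minima g \<longleftrightarrow> s1 \<le> 0 \<and> 0 \<le> (-1::real)" "z \<in> local_maxima g \<longleftrightarrow> 0 \<le> s1 \<and> (-1::real) \<le> 0"
    using extrema_before_piece[OF pieces _ falls_after] \<open>\<delta> > 0\<close> by force
  then have "z \<notin> local_minima g" "z \<in> local_maxima g \<longleftrightarrow> rises_to g z" by auto
  moreover have "local_minima g \<subseteq> {a<..}" "local_maxima g \<subseteq> {a<..}"
    using local_extrema_subset[OF pieces] T_right by auto
  ultimately have max_split:
      "local_maxima g \<inter> {..z} = local_maxima g \<inter> {a<..<z} \<union> (if rises_to g z then {z} else {})"
    and min_split: "local_minima g \<inter> {..z} = local_minima g \<inter> {a<..<z}"
    by (auto simp: subset_iff order.order_iff_strict)
  have "ln (left_weight g z w)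
      = (\<Sum>y\<in>local_maxima g \<inter> {..z}. ln (w - y)) - (\<Sum>x\<in>local_minima g \<inter> {..z}. ln (w - x))"
    using fin \<open>z < w\<close> by (rule ln_left_weight_eq_sums)
  also have "\<dots> = (\<Sum>y\<in>local_maxima g \<inter> {a<..<z}. ln (w - y)) - (\<Sum>x\<in>local_minima g \<inter> {a<..<z}. ln (w - x))
      + (if rises_to g z then ln (w - z) else 0)"
    unfolding max_split min_split using fin by (simp add: sum.union_disjoint)
  also have "\<dots> = - rise_integral g w a z / 2"
    by (rule log_extrema_sum_eq_rise_integral[OF pieces cont T_right falls \<open>a < z\<close> \<open>z < w\<close>])
  finally show ?thesis .
qed

section \<open>The \<epsilon>-shift along a line\<close>

locale eps_shift_along_line =
  fixes \<Omega> :: "real \<Rightarrow> real" and \<epsilon> b zp :: real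
  assumes zigzag: "zigzag \<Omega>" and eps_pos: "\<epsilon> > 0" and b_pos: "b > 0"
    and crossing: "zp + b = \<Omega> (zp - \<epsilon>) + \<epsilon>"
    and last_crossing: "\<And>z. z + b = \<Omega> (z - \<epsilon>) + \<epsilon> \<Longrightarrow> z \<le> zp"
begin

definition lifted :: "real \<Rightarrow> real" where
  "lifted z = \<Omega> (z - \<epsilon>) + \<epsilon>"

definition shifted :: "real \<Rightarrow> real" where
  "shifted = eps_shift \<Omega> \<epsilon> (\<lambda>x. x + b)"

lemma shifted_eq: "shifted z = min (max (lifted z - 2 * \<epsilon>) (z + b)) (lifted z)"
  by (simp add: shifted_def eps_shift_def lifted_def)

lemma lifted_crossing: "lifted zp = zp + b"
  using crossing by (simp add: lifted_def)

lemma lifted_lipschitz: "\<bar>lifted x - lifted y\<bar> \<le> \<bar>x - y\<bar>"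
proof -
  have "\<forall>z1 z2. \<bar>\<Omega> z1 - \<Omega> z2\<bar> \<le> \<bar>z1 - z2\<bar>"
    using zigzag by (simp add: zigzag_def continual_diagram_def)
  then have "\<bar>\<Omega> (x - \<epsilon>) - \<Omega> (y - \<epsilon>)\<bar> \<le> \<bar>(x - \<epsilon>) - (y - \<epsilon>)\<bar>" by blast
  then show ?thesis by (simp add: lifted_def)
qed

lemma continuous_lifted: "continuous_on UNIV lifted"
proof -
  have "1-lipschitz_on UNIV lifted"
    by (rule lipschitz_onI) (use lifted_lipschitz in \<open>auto simp: dist_real_def\<close>)
  then show ?thesis by (rule lipschitz_on_continuous_on)
qed

lemma continuous_shifted: "continuous_on UNIV shifted"
proof -
  have "shifted = (\<lambda>z. min (max (lifted z - 2 * \<epsilon>) (z + b)) (lifted z))"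
    by (rule ext) (rule shifted_eq)
  show ?thesis unfolding \<open>shifted = _\<close> by (intro continuous_intros continuous_lifted)
qed

lemma unit_slope_pieces_lifted:
  obtains T where "unit_slope_pieces lifted T"
proof -
  obtain S where "unit_slope_pieces \<Omega> S" using zigzag by (rule zigzag_unit_slope_pieces)
  then have "unit_slope_pieces (\<lambda>x. \<Omega> (x - \<epsilon>) + \<epsilon>) ((\<lambda>x. x + \<epsilon>) ` S)" by (rule unit_slope_pieces_shift)
  then show thesis using that by (simp add: lifted_def[abs_def])
qed

lemma unit_slope_pieces_shifted:
  obtains T where "unit_slope_pieces shifted T"
proof -
  obtain S where "unit_slope_pieces \<Omega> S" using zigzag by (rule zigzag_unit_slope_pieces)
  then have lowered: "unit_slope_pieces (\<lambda>x. \<Omega> (x - \<epsilon>) + - \<epsilon>) ((\<lambda>x. x + \<epsilon>) ` S)"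
    by (rule unit_slope_pieces_shift)
  obtain T1 where T1: "unit_slope_pieces lifted T1" by (rule unit_slope_pieces_lifted)
  have eq: "(\<lambda>x. min (max (\<Omega> (x - \<epsilon>) + - \<epsilon>) (x + b)) (lifted x)) = shifted"
    by (simp add: fun_eq_iff shifted_def eps_shift_def lifted_def)
  from unit_slope_pieces_min[OF unit_slope_pieces_max[OF lowered unit_slope_pieces_line[of b]] T1]
  show thesis unfolding eq by (rule that)
qed

lemma line_above_lifted:
  assumes "zp < u"
  shows "lifted u < u + b"
proof (rule ccontr)
  assume "\<not> lifted u < u + b"
  obtain R where R: "\<And>z. \<bar>z\<bar> \<ge> R \<Longrightarrow> \<Omega> z = \<bar>z\<bar>"
    using zigzag unfolding zigzag_def continual_diagram_def by metis
  define U where "U = max u (\<bar>R\<bar> + \<epsilon>) + 1"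
  have "\<Omega> (U - \<epsilon>) = U - \<epsilon>" using R[of "U - \<epsilon>"] eps_pos by (simp add: U_def)
  then have "lifted U - (U + b) \<le> 0" using b_pos by (simp add: lifted_def)
  moreover have "0 \<le> lifted u - (u + b)" using \<open>\<not> lifted u < u + b\<close> by simp
  moreover have "continuous_on {u..U} (\<lambda>x. lifted x - (x + b))"
    by (intro continuous_intros continuous_on_subset[OF continuous_lifted]) auto
  ultimately obtain x where "u \<le> x" "lifted x - (x + b) = 0"
    using IVT2'[of "\<lambda>x. lifted x - (x + b)" U 0 u] by (force simp: U_def)
  then have "x \<le> zp" using last_crossing[of x] by (simp add: lifted_def)
  then show False using \<open>zp < u\<close> \<open>u \<le> x\<close> by simp
qed

lemma shifted_eq_lifted:
  assumes "zp \<le> u"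
  shows "shifted u = lifted u"
proof -
  have "lifted u \<le> u + b"
    using line_above_lifted[of u] lifted_crossing assms by (cases "u = zp") auto
  then show ?thesis using eps_pos by (simp add: shifted_eq)
qed

lemma shifted_minus_lifted_ge:
  assumes "u \<le> zp"
  shows "2 * max (-\<epsilon>) (u - zp) \<le> shifted u - lifted u"
proof -
  have "\<bar>lifted u - lifted zp\<bar> \<le> zp - u" using lifted_lipschitz[of u zp] assms by simp
  then have "u + b \<le> lifted u" "lifted u \<le> 2 * zp - u + b" using lifted_crossing by auto
  then show ?thesis using eps_pos by (simp add: shifted_eq max_def)
qed

lemma lifted_falls_after_crossing:
  obtains \<delta> where "\<delta> > 0" "slope_on lifted (-1) {zp..zp+\<delta>}"
proof -
  obtain T where "unit_slope_pieces lifted T" by (rule unit_slope_pieces_lifted)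
  then obtain \<delta> s where "\<delta> > 0" "s \<in> {-1, 1}" and s: "slope_on lifted s {zp..zp+\<delta>}"
    using unit_slope_pieces_local by metis
  have "s \<noteq> 1"
  proof
    assume "s = 1"
    then have "lifted (zp + \<delta>) = zp + \<delta> + b"
      using slope_onD[OF s, of zp "zp + \<delta>"] \<open>\<delta> > 0\<close> lifted_crossing by simp
    then show False using line_above_lifted[of "zp + \<delta>"] \<open>\<delta> > 0\<close> by simp
  qed
  then show thesis using that \<open>\<delta> > 0\<close> \<open>s \<in> {-1, 1}\<close> s by auto
qed

lemma left_tails:
  obtains L where "\<And>x. x \<le> L \<Longrightarrow> lifted x = 2 * \<epsilon> - x \<and> shifted x = - x"
proof -
  obtain R where R: "\<And>z. \<bar>z\<bar> \<ge> R \<Longrightarrow> \<Omega> z = \<bar>z\<bar>"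
    using zigzag unfolding zigzag_def continual_diagram_def by metis
  have "lifted x = 2 * \<epsilon> - x \<and> shifted x = - x" if "x \<le> min (\<epsilon> - \<bar>R\<bar>) (- b / 2)" for x
  proof -
    have "\<Omega> (x - \<epsilon>) = \<epsilon> - x" using R[of "x - \<epsilon>"] that by auto
    then have "lifted x = 2 * \<epsilon> - x" by (simp add: lifted_def)
    moreover have "x + b \<le> - x" using that by simp
    ultimately show ?thesis using eps_pos by (simp add: shifted_eq)
  qed
  then show thesis by (rule that)
qed

lemma far_left_point:
  assumes "finite S"
  obtains a where "a < zp - \<epsilon>" "\<forall>t\<in>S. a < t" "shifted a - lifted a = - 2 * \<epsilon>"
    "slope_on lifted (-1) {..a}" "slope_on shifted (-1) {..a}"
proof -
  obtain L where tails: "\<And>x. x \<le> L \<Longrightarrow> lifted x = 2 * \<epsilon> - x \<and> shifted x = - x"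
    using left_tails by blast
  obtain m where m: "\<forall>t\<in>S. m \<le> t" using bdd_below_finite[OF assms] unfolding bdd_below_def by blast
  define a where "a = min (min m L) (zp - \<epsilon>) - 1"
  have "a < m" "a \<le> L" "a < zp - \<epsilon>" by (auto simp: a_def)
  moreover have "a < t" if "t \<in> S" for t using m that \<open>a < m\<close> by fastforce
  moreover have "slope_on lifted (-1) {..a}" "slope_on shifted (-1) {..a}"
    using tails \<open>a \<le> L\<close> unfolding slope_on_def by auto
  ultimately show thesis using that tails[of a] by simp
qed

lemma rise_integral_shifted_le:
  assumes "a < zp - \<epsilon>" "shifted a - lifted a = - 2 * \<epsilon>" "zp < w"
  shows "rise_integral shifted w a zp - rise_integral lifted w a zp \<le> 2 * (ln (w - zp + \<epsilon>) - ln (w - zp))"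
proof -
  have "rise_integral shifted w a zp - rise_integral lifted w a zp
      \<le> (shifted zp - lifted zp) / (w - zp) - (shifted a - lifted a) / (w - a)
         - integral {a..zp} (\<lambda>u. 2 * max (-\<epsilon>) (u - zp) / (w - u)^2)"
    using assms(1,3) eps_pos shifted_minus_lifted_ge
    by (intro rise_integral_diff_le continuous_on_subset[OF continuous_lifted]
        continuous_on_subset[OF continuous_shifted] continuous_intros) auto
  also have "integral {a..zp} (\<lambda>u. 2 * max (-\<epsilon>) (u - zp) / (w - u)^2)
      = 2 * integral {a..zp} (\<lambda>u. max (-\<epsilon>) (u - zp) / (w - u)^2)"
    by (simp only: times_divide_eq_right[symmetric] Henstock_Kurzweil_Integration.integral_mult_right)
  also have "\<dots> = 2 * (\<epsilon> / (w - a) + ln (w - zp) - ln (w - zp + \<epsilon>))"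
    using integral_clipped_ramp[of a zp \<epsilon> w] assms eps_pos by simp
  also have "shifted zp - lifted zp = 0" using shifted_eq_lifted[of zp] by simp
  finally show ?thesis unfolding assms(2) by (simp add: algebra_simps)
qed

lemma left_weight_shifted_ge:
  assumes "zp < w"
  shows "left_weight lifted zp w * ((w - zp) / (w + \<epsilon> - zp)) \<le> left_weight shifted zp w"
proof -
  obtain T1 where T1: "unit_slope_pieces lifted T1" by (rule unit_slope_pieces_lifted)
  obtain Tb where Tb: "unit_slope_pieces shifted Tb" by (rule unit_slope_pieces_shifted)
  obtain \<delta> where "\<delta> > 0" and falls_lifted: "slope_on lifted (-1) {zp..zp+\<delta>}"
    by (rule lifted_falls_after_crossing)
  have falls_shifted: "slope_on shifted (-1) {zp..zp+\<delta>}"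
    using falls_lifted slope_on_cong[of "{zp..zp+\<delta>}" shifted lifted] shifted_eq_lifted by auto
  obtain a where "a < zp - \<epsilon>" "\<forall>t\<in>T1 \<union> Tb. a < t" "shifted a - lifted a = - 2 * \<epsilon>"
    and tail: "slope_on lifted (-1) {..a}" "slope_on shifted (-1) {..a}"
    using far_left_point unit_slope_pieces_finite[OF T1] unit_slope_pieces_finite[OF Tb] by (metis finite_Un)
  then have "a < zp" "\<forall>t\<in>T1. a < t" "\<forall>t\<in>Tb. a < t" using eps_pos by auto
  have "ln (left_weight lifted zp w) + (ln (w - zp) - ln (w + \<epsilon> - zp)) \<le> ln (left_weight shifted zp w)"
    using rise_integral_shifted_le[OF \<open>a < zp - \<epsilon>\<close> \<open>shifted a - lifted a = - 2 * \<epsilon>\<close> assms]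
      ln_left_weight[OF T1 continuous_lifted \<open>\<forall>t\<in>T1. a < t\<close> tail(1) \<open>a < zp\<close> assms \<open>\<delta> > 0\<close> falls_lifted]
      ln_left_weight[OF Tb continuous_shifted \<open>\<forall>t\<in>Tb. a < t\<close> tail(2) \<open>a < zp\<close> assms \<open>\<delta> > 0\<close> falls_shifted]
    by (simp add: algebra_simps)
  moreover have pos:
      "0 < left_weight lifted zp w" "0 < left_weight shifted zp w" "0 < w - zp" "0 < w + \<epsilon> - zp"
    using left_weight_pos[OF assms] assms eps_pos by auto
  moreover have "ln (left_weight lifted zp w * ((w - zp) / (w + \<epsilon> - zp)))
      = ln (left_weight lifted zp w) + (ln (w - zp) - ln (w + \<epsilon> - zp))"
    using pos by (simp add: ln_mult ln_div)
  ultimately show ?thesis using pos by (simp flip: ln_le_cancel_iff)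
qed

lemma zigzag_weight_shifted_ge:
  assumes "zp < w" "w \<in> local_minima lifted" "0 \<le> zigzag_weight lifted w"
  shows "zigzag_weight lifted w * ((w - zp) / (w + \<epsilon> - zp)) \<le> zigzag_weight shifted w"
proof -
  obtain T1 where T1: "unit_slope_pieces lifted T1" by (rule unit_slope_pieces_lifted)
  obtain Tb where Tb: "unit_slope_pieces shifted Tb" by (rule unit_slope_pieces_shifted)
  have agree: "shifted u = lifted u" if "zp < u" for u using that shifted_eq_lifted by simp
  have "w \<in> local_minima shifted"
    using local_extrema_cong(1)[of "w - zp" w lifted shifted] assms agree by fastforce
  then have shifted_split: "zigzag_weight shifted w = left_weight shifted zp w * right_weight lifted zp w"
    using zigzag_weight_split[OF finite_local_extrema[OF Tb] _ assms(1)] right_weight_cong[of zp shifted lifted w] agree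
    by simp
  have lifted_split: "zigzag_weight lifted w = left_weight lifted zp w * right_weight lifted zp w"
    using zigzag_weight_split[OF finite_local_extrema[OF T1] assms(2,1)] .
  have "0 \<le> right_weight lifted zp w"
    using assms(3) left_weight_pos[OF assms(1), of lifted] unfolding lifted_split
    by (simp add: zero_le_mult_iff)
  have "zigzag_weight lifted w * ((w - zp) / (w + \<epsilon> - zp))
      = left_weight lifted zp w * ((w - zp) / (w + \<epsilon> - zp)) * right_weight lifted zp w"
    unfolding lifted_split by (simp only: ac_simps)
  also have "\<dots> \<le> left_weight shifted zp w * right_weight lifted zp w"
    using left_weight_shifted_ge[OF assms(1)] \<open>0 \<le> right_weight lifted zp w\<close> by (rule mult_right_mono)
  finally show ?thesis unfolding shifted_split .
qed

lemma weight_times_P_min_le: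
  "ennreal (zigzag_weight \<Omega> (y - \<epsilon>)) * ennreal (P_min \<epsilon> zp y) \<le> ennreal (zigzag_weight shifted y)"
proof (cases "zp < y \<and> y \<in> local_minima lifted \<and> 0 \<le> zigzag_weight \<Omega> (y - \<epsilon>)")
  case True
  have "zigzag_weight lifted y = zigzag_weight \<Omega> (y - \<epsilon>)"
    using zigzag_weight_shift[of \<Omega> \<epsilon> \<epsilon> "y - \<epsilon>"] by (simp add: lifted_def[abs_def])
  then have "zigzag_weight \<Omega> (y - \<epsilon>) * P_min \<epsilon> zp y \<le> zigzag_weight shifted y"
    using zigzag_weight_shifted_ge[of y] True by (simp add: P_min_def)
  then show ?thesis using True by (simp add: ennreal_mult'[symmetric] ennreal_leI)
next
  case False
  have "y \<in> local_minima lifted \<longleftrightarrow> y - \<epsilon> \<in> local_minima \<Omega>"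
    using local_minima_shift_iff[of y \<Omega> \<epsilon> \<epsilon>] by (simp add: lifted_def[abs_def])
  moreover have "P_min \<epsilon> zp y = 0" if "y \<le> zp" using that by (auto simp: P_min_def)
  ultimately show ?thesis
    using False by (auto simp: zigzag_weight_def ennreal_neg)
qed

end

lemma nn_integral_transition_measure:
  "(\<integral>\<^sup>+ z. f z \<partial>transition_measure \<omega>) = (\<integral>\<^sup>+ z. ennreal (zigzag_weight \<omega> z) * f z \<partial>count_space UNIV)"
  unfolding transition_measure_def by (simp add: nn_integral_density)

lemma P_min_nonneg: "\<epsilon> > 0 \<Longrightarrow> 0 \<le> P_min \<epsilon> zp z"
  by (simp add: P_min_def)

theorem proposition5p1:
  fixes \<Omega> :: "real \<Rightarrow> real" and \<epsilon> b zp :: real and \<phi> :: "real \<Rightarrow> real"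
  assumes "zigzag \<Omega>"
    and "\<epsilon> > 0"
    and "b > 0"
    and "zp + b = \<Omega> (zp - \<epsilon>) + \<epsilon>"
    and "\<forall>z. z + b = \<Omega> (z - \<epsilon>) + \<epsilon> \<longrightarrow> z \<le> zp"
    and "\<forall>z. \<phi> z \<ge> 0"
  shows "(\<integral>\<^sup>+ z. ennreal (\<phi> z) \<partial>transition_measure (eps_shift \<Omega> \<epsilon> (\<lambda>x. x + b)))
         \<ge> (\<integral>\<^sup>+ z. ennreal (\<phi> (z + \<epsilon>) * P_min \<epsilon> zp (z + \<epsilon>)) \<partial>transition_measure \<Omega>)"
proof -
  interpret eps_shift_along_line \<Omega> \<epsilon> b zp
    using assms(1-5) by unfold_locales auto
  define F where "F y = ennreal (zigzag_weight \<Omega> (y - \<epsilon>)) * ennreal (\<phi> y * P_min \<epsilon> zp y)" for y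
  have "(\<integral>\<^sup>+ z. ennreal (\<phi> (z + \<epsilon>) * P_min \<epsilon> zp (z + \<epsilon>)) \<partial>transition_measure \<Omega>)
      = (\<integral>\<^sup>+ z. F (z + \<epsilon>) \<partial>count_space UNIV)"
    by (simp add: nn_integral_transition_measure F_def)
  also have "\<dots> = (\<integral>\<^sup>+ y. F y \<partial>count_space UNIV)"
    by (rule nn_integral_bij_count_space) (rule bij_betwI[of _ _ _ "\<lambda>y. y - \<epsilon>"], auto)
  also have "\<dots> \<le> (\<integral>\<^sup>+ y. ennreal (zigzag_weight shifted y) * ennreal (\<phi> y) \<partial>count_space UNIV)"
  proof (rule nn_integral_mono)
    fix y
    have "F y = ennreal (zigzag_weight \<Omega> (y - \<epsilon>)) * ennreal (P_min \<epsilon> zp y) * ennreal (\<phi> y)"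
      using assms(6) P_min_nonneg[OF eps_pos] by (simp add: F_def ennreal_mult ac_simps)
    also have "\<dots> \<le> ennreal (zigzag_weight shifted y) * ennreal (\<phi> y)"
      by (rule mult_right_mono[OF weight_times_P_min_le]) simp
    finally show "F y \<le> ennreal (zigzag_weight shifted y) * ennreal (\<phi> y)" .
  qed
  also have "\<dots> = (\<integral>\<^sup>+ y. ennreal (\<phi> y) \<partial>transition_measure shifted)"
    by (simp add: nn_integral_transition_measure)
  finally show ?thesis by (simp add: shifted_def)
qed

end
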